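(* Let $(\Phi,\Sigma_\Phi)$ be a measurable space, $\pi$ a probability measure on it, and $f\in\mathcal{F}_c$. Then for every probability measure $\nu$ on $(\Phi,\Sigma_\Phi)$ with $\mathcal{D}_f(\nu,\pi)<\infty$, $$\mathcal{D}_f(\nu,\pi)=\sup_h\Big\{\mathbb{E}_\nu[h]-\tilde{\mathcal{D}}_{f,\pi}^*(h)\Big\},$$ where the supremum is taken over all $\pi$-measurable functions $h\colon\Phi\to\mathbb{R}$.
   Context: $\mathcal{F}$ is the set of convex functions $f\colon\mathbb{R}\to\mathbb{R}\cup\{+\infty\}$ with $f(1)=0$, $f(x)\in\mathbb{R}$ for all $x>0$, and $f(x)=+\infty$ for all $x<0$; $\mathcal{F}_c$ is the subset of $f\in\mathcal{F}$ that are continuous on $[0,\infty)$, twice differentiable on $(0,\infty)$, and such that $1/f''$ is concave on $(0,\infty)$. The $f$-divergence is $\mathcal{D}_f(\nu,\mu)=\int f\big(\frac{\mathrm{d}\nu}{\mathrm{d}\mu}\big)\mathrm{d}\mu$ if $\nu\ll\mu$ and $+\infty$ otherwise. The Legendre transform is $f^*(t)=\sup_{x\geq 0}\{xt-f(x)\}$; $f'$ and ${f^*}'$ denote derivatives (or any element of the subdifferential where not differentiable), with $f'(0):=\inf\bigcup_{x>0}f'(x)$. Define $$\tilde{\mathcal{D}}_{f,\pi}^*(h):=\mathbb{E}_\pi[f^*(h)]+f'\big(\mathbb{E}_\pi[{f^*}'(h)]\big)-f^*\big(f'\big(\mathbb{E}_\pi[{f^*}'(h)]\big)\big),$$ with the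 conventions that $\tilde{\mathcal{D}}_{f,\pi}^*(h)=+\infty$ if $f^*(h)$ is not $\pi$-integrable, and $\tilde{\mathcal{D}}_{f,\pi}^*(h)=\mathbb{E}_\pi[f^*(h)]$ if ${f^*}'(h)$ is not $\pi$-integrable. $\mathbb{E}_\nu[\cdot]=\int\cdot\,\mathrm{d}\nu$, $\mathbb{E}_\pi[\cdot]=\int\cdot\,\mathrm{d}\pi$. *)

theory Defs
  imports "HOL-Probability.Probability"
begin

text \<open>The class F_c, for f given by its (finite) values on [0,\<infinity>); the value +\<infinity> on
  the negative reals is implicit (it never enters any of the quantities below).\<close>
definition Fc :: "(real \<Rightarrow> real) \<Rightarrow> bool" where
  "Fc f \<longleftrightarrow> convex_on {0..} f \<and> f 1 = 0 \<and> continuous_on {0..} f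
     \<and> (\<forall>x>0. (f has_real_derivative deriv f x) (at x))
     \<and> (\<forall>x>0. (deriv f has_real_derivative deriv (deriv f) x) (at x))
     \<and> (\<forall>x>0. deriv (deriv f) x \<noteq> 0)
     \<and> concave_on {0<..} (\<lambda>x. 1 / deriv (deriv f) x)"

definition fstar :: "(real \<Rightarrow> real) \<Rightarrow> real \<Rightarrow> ereal" where
  "fstar f t = (SUP x\<in>{0..}. ereal (x * t - f x))"

text \<open>s is a subgradient of f* at t (only required where f*(t) is finite).\<close>
definition fstar_subgrad :: "(real \<Rightarrow> real) \<Rightarrow> real \<Rightarrow> real \<Rightarrow> bool" where
  "fstar_subgrad f t s \<longleftrightarrow> (\<forall>u. fstar f u \<ge> fstar f t + ereal (s * (u - t)))"

definition fder :: "(real \<Rightarrow> real) \<Rightarrow> real \<Rightarrow> real" where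
  "fder f x = (if 0 < x then deriv f x else Inf (deriv f ` {0<..}))"

definition eint :: "'a measure \<Rightarrow> ('a \<Rightarrow> ereal) \<Rightarrow> ereal" where
  "eint M g = enn2ereal (\<integral>\<^sup>+ x. e2ennreal (g x) \<partial>M) - enn2ereal (\<integral>\<^sup>+ x. e2ennreal (- g x) \<partial>M)"

definition eintegrable :: "'a measure \<Rightarrow> ('a \<Rightarrow> ereal) \<Rightarrow> bool" where
  "eintegrable M g \<longleftrightarrow> g \<in> borel_measurable M
     \<and> (\<integral>\<^sup>+ x. e2ennreal (g x) \<partial>M) < \<infinity> \<and> (\<integral>\<^sup>+ x. e2ennreal (- g x) \<partial>M) < \<infinity>"

definition fdiv :: "(real \<Rightarrow> real) \<Rightarrow> 'a measure \<Rightarrow> 'a measure \<Rightarrow> ereal" where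
  "fdiv f N P = (if absolutely_continuous P N
     then eint P (\<lambda>x. ereal (f (enn2real (RN_deriv P N x)))) else \<infinity>)"

text \<open>The modified dual functional tilde-D*_{f,P}(h), for a chosen selection fsd of f*'.\<close>
definition Dtilde :: "(real \<Rightarrow> real) \<Rightarrow> (real \<Rightarrow> real) \<Rightarrow> 'a measure \<Rightarrow> ('a \<Rightarrow> real) \<Rightarrow> ereal" where
  "Dtilde f fsd P h =
     (if \<not> eintegrable P (\<lambda>x. fstar f (h x)) then \<infinity>
      else if \<not> integrable P (\<lambda>x. fsd (h x)) then eint P (\<lambda>x. fstar f (h x))
      else (let m = (\<integral>x. fsd (h x) \<partial>P) in
            eint P (\<lambda>x. fstar f (h x)) + ereal (fder f m) - fstar f (fder f m)))"

definition dual_obj :: "(real \<Rightarrow> real) \<Rightarrow> (real \<Rightarrow> real) \<Rightarrow> 'a measure \<Rightarrow> 'a measure \<Rightarrow> ('a \<Rightarrow> real) \<Rightarrow> ereal" where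
  "dual_obj f fsd N P h =
     (if Dtilde f fsd P h = \<infinity> then - \<infinity> else eint N (\<lambda>x. ereal (h x)) - Dtilde f fsd P h)"

end

theory Submission
  imports Defs
begin

text \<open>Write \<open>g = d\<nu>/d\<pi>\<close>.

  Lower bound: put \<open>h = f'(c)\<close> where \<open>c\<close> is \<open>g\<close> clipped to \<open>[1/(n+1), n+1]\<close>. Then
  \<open>f*(h) = c f'(c) - f(c)\<close>, the correction term of the modified dual functional is \<open>\<le> 0\<close>
  because \<open>f*(s) \<ge> s\<close>, and \<open>g h - f*(h)\<close> is the tangent of \<open>f\<close> at \<open>c\<close> evaluated at \<open>g\<close>.
  These tangents lie between \<open>f'(1)(g - 1)\<close> and \<open>f(g)\<close> and converge to \<open>f(g)\<close>, so dominated
  convergence yields \<open>D_f(\<nu>, \<pi>)\<close>.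

  Upper bound: writing the Bregman divergence \<open>B(x, y) = f(x) - f(y) - f'(y)(x - y)\<close> as the
  integral of \<open>(1 - u) (x - y)\<^sup>2 / \<psi>(y + u(x - y))\<close> with \<open>\<psi> = 1/f''\<close> concave and positive shows
  that \<open>B\<close> is jointly convex. If \<open>q\<close> is a subgradient of \<open>f*\<close> at \<open>t\<close>, then \<open>t\<close> is a
  subgradient of \<open>f\<close> at \<open>q\<close> and \<open>g t - f*(t) = f(g) - B(g, q)\<close>. Bounding \<open>B(g, q)\<close> below by
  its tangent plane at \<open>(1, m)\<close>, \<open>m = E\<^sub>\<pi>[q]\<close>, and integrating leaves exactly
  \<open>-B(1, m) = f'(m) - f*(f'(m))\<close>, the correction term. The case \<open>q = 0\<close> follows by letting
  the second argument of \<open>B\<close> tend to \<open>0\<close>, since \<open>y f'(y) \<rightarrow> 0\<close> as \<open>y \<rightarrow> 0\<close>; and \<open>m = 0\<close> forces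
  \<open>q = 0\<close> almost everywhere.\<close>

section \<open>Convex functions of class F_c\<close>

lemma
  assumes "Fc f"
  shows Fc_convex: "convex_on {0..} f"
    and Fc_one: "f 1 = 0"
    and Fc_continuous: "continuous_on {0..} f"
    and Fc_deriv: "x > 0 \<Longrightarrow> (f has_real_derivative deriv f x) (at x)"
    and Fc_deriv2: "x > 0 \<Longrightarrow> (deriv f has_real_derivative deriv (deriv f) x) (at x)"
    and Fc_deriv2_nonzero: "x > 0 \<Longrightarrow> deriv (deriv f) x \<noteq> 0"
    and Fc_inverse_deriv2_concave: "concave_on {0<..} (\<lambda>x. 1 / deriv (deriv f) x)"
  using assms by (simp_all add: Fc_def)

lemma Fc_above_tangent:
  assumes "Fc f" "y > 0" "x \<ge> 0"
  shows "f y + deriv f y * (x - y) \<le> f x"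
proof -
  have "deriv f y * (x - y) \<le> f x - f y"
  proof (rule convex_on_imp_above_tangent[of "{0..}"])
    show "(f has_real_derivative deriv f y) (at y within {0..})"
      using Fc_deriv[OF assms(1,2)] by (rule has_field_derivative_at_within)
  qed (use assms Fc_convex in auto)
  then show ?thesis by simp
qed

lemma Fc_above_tangent_1: "Fc f \<Longrightarrow> x \<ge> 0 \<Longrightarrow> deriv f 1 * (x - 1) \<le> f x"
  using Fc_above_tangent[of f 1 x] Fc_one[of f] by simp

lemma Fc_deriv_mono:
  assumes "Fc f" "0 < x" "x \<le> y"
  shows "deriv f x \<le> deriv f y"
proof -
  have "f x + deriv f x * (y - x) \<le> f y" "f y + deriv f y * (x - y) \<le> f x"
    using Fc_above_tangent[OF assms(1)] assms by auto
  then have "0 \<le> (deriv f y - deriv f x) * (y - x)" by (simp add: algebra_simps)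
  with assms show ?thesis by (cases "x = y") (auto simp: zero_le_mult_iff)
qed

lemma Fc_deriv2_pos:
  assumes "Fc f" "x > 0"
  shows "deriv (deriv f) x > 0"
proof (rule ccontr)
  assume "\<not> ?thesis"
  then have "deriv (deriv f) x < 0" using Fc_deriv2_nonzero[OF assms] by linarith
  then obtain d where d: "d > 0" "\<And>h. h > 0 \<Longrightarrow> h < d \<Longrightarrow> deriv f (x + h) < deriv f x"
    using DERIV_neg_dec_right[OF Fc_deriv2[OF assms]] by blast
  have "deriv f x \<le> deriv f (x + d/2)" using Fc_deriv_mono[OF assms(1), of x "x + d/2"] assms d by simp
  with d(2)[of "d/2"] d(1) show False by simp
qed

lemma Fc_deriv_continuous_on: "Fc f \<Longrightarrow> continuous_on {0<..} (deriv f)"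
  by (rule DERIV_continuous_on[of _ _ "deriv (deriv f)"])
    (auto intro: has_field_derivative_at_within Fc_deriv2)

lemma Fc_tendsto_at_right_0: "Fc f \<Longrightarrow> (f \<longlongrightarrow> f 0) (at_right 0)"
  using Fc_continuous[of f]
  by (auto simp: continuous_on_def intro: tendsto_within_subset)

lemma Fc_tendsto_mult_deriv:
  assumes "Fc f"
  shows "((\<lambda>y. y * deriv f y) \<longlongrightarrow> 0) (at_right 0)"
proof (rule tendsto_sandwich)
  show "\<forall>\<^sub>F y in at_right 0. f y - f 0 \<le> y * deriv f y"
    unfolding eventually_at_right_field
    by (intro exI[of _ 1]) (use Fc_above_tangent[OF assms, of _ 0] in \<open>auto simp: algebra_simps\<close>)
  show "\<forall>\<^sub>F y in at_right 0. y * deriv f y \<le> y * deriv f 1"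
    unfolding eventually_at_right_field using Fc_deriv_mono[OF assms]
    by (intro exI[of _ 1]) (auto intro: mult_left_mono)
  show "((\<lambda>y. f y - f 0) \<longlongrightarrow> 0) (at_right 0)"
    using tendsto_diff[OF Fc_tendsto_at_right_0[OF assms] tendsto_const[of "f 0"]] by simp
  show "((\<lambda>y. y * deriv f 1) \<longlongrightarrow> 0) (at_right (0::real))"
    using tendsto_mult_right[OF tendsto_ident_at[of 0 "{0<..}"], of "deriv f 1"] by simp
qed

lemma tendsto_at_right_0_le:
  fixes F G :: "real \<Rightarrow> real"
  assumes "(F \<longlongrightarrow> a) (at_right 0)" "(G \<longlongrightarrow> b) (at_right 0)"
    and "d > 0" "\<And>x. 0 < x \<Longrightarrow> x < d \<Longrightarrow> G x \<le> F x"
  shows "b \<le> a"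
proof (rule tendsto_le[OF trivial_limit_at_right_real assms(1,2)])
  show "\<forall>\<^sub>F x in at_right 0. G x \<le> F x"
    unfolding eventually_at_right_field using assms(3,4) by blast
qed

lemma Fc_borel_measurable:
  assumes "Fc f" "g \<in> borel_measurable M" "\<And>x. g x \<ge> 0"
  shows "(\<lambda>x. f (g x)) \<in> borel_measurable M"
proof -
  have "continuous_on UNIV (\<lambda>x. f (max 0 x))"
    by (rule continuous_on_compose2[OF Fc_continuous[OF assms(1)]]) (auto intro!: continuous_intros)
  then have "(\<lambda>x. f (max 0 (g x))) \<in> borel_measurable M"
    using borel_measurable_continuous_onI measurable_compose assms(2) by blast
  with assms(3) show ?thesis by (simp add: max_absorb2)
qed

section \<open>Joint convexity of the Bregman divergence\<close>

definition bregman :: "(real \<Rightarrow> real) \<Rightarrow> real \<Rightarrow> real \<Rightarrow> real" where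
  "bregman f x y = f x - f y - deriv f y * (x - y)"

lemma convex_combination_pos:
  fixes x y l :: real
  shows "0 < x \<Longrightarrow> 0 < y \<Longrightarrow> 0 \<le> l \<Longrightarrow> l \<le> 1 \<Longrightarrow> 0 < (1 - l) * x + l * y"
  by (cases "l = 1") (auto intro: add_pos_nonneg)

lemma quadratic_over_linear_convex:
  fixes c c1 c2 d1 d2 l :: real
  assumes "c1 > 0" "c2 > 0" "0 \<le> l" "l \<le> 1" "(1 - l) * c1 + l * c2 \<le> c"
  shows "((1 - l) * d1 + l * d2)\<^sup>2 / c \<le> (1 - l) * (d1\<^sup>2 / c1) + l * (d2\<^sup>2 / c2)"
proof -
  let ?c = "(1 - l) * c1 + l * c2"
  have "?c > 0" using assms by (intro convex_combination_pos)
  have "((1 - l) * d1 + l * d2)\<^sup>2 / c \<le> ((1 - l) * d1 + l * d2)\<^sup>2 / ?c"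
    using \<open>?c > 0\<close> assms(5) by (intro divide_left_mono) auto
  also have "\<dots> \<le> (1 - l) * (d1\<^sup>2 / c1) + l * (d2\<^sup>2 / c2)"
  proof -
    have "((1 - l) * (d1\<^sup>2 * c2) + l * (d2\<^sup>2 * c1)) * ?c - ((1 - l) * d1 + l * d2)\<^sup>2 * (c1 * c2)
          = (1 - l) * l * (d1 * c2 - d2 * c1)\<^sup>2"
      by (simp add: algebra_simps power2_eq_square)
    also have "\<dots> \<ge> 0" using assms by simp
    finally show ?thesis
      using \<open>?c > 0\<close> assms by (simp add: field_simps)
  qed
  finally show ?thesis .
qed

lemma bregman_has_integral:
  assumes "Fc f" "x > 0" "y > 0"
  shows "((\<lambda>u. (1 - u) * (x - y)\<^sup>2 * deriv (deriv f) (y + u * (x - y))) has_integral bregman f x y) {0..1}"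
proof -
  define W where "W u = (1 - u) * (x - y) * deriv f (y + u * (x - y)) + f (y + u * (x - y))" for u
  have "((\<lambda>u. (1 - u) * (x - y)\<^sup>2 * deriv (deriv f) (y + u * (x - y))) has_integral (W 1 - W 0)) {0..1}"
  proof (rule fundamental_theorem_of_calculus)
    fix u :: real assume u: "u \<in> {0..1}"
    have pos: "y + u * (x - y) > 0"
      using u assms convex_combination_pos[of y x u] by (simp add: algebra_simps)
    have line: "((\<lambda>u. y + u * (x - y)) has_real_derivative x - y) (at u)"
      by (auto intro!: derivative_eq_intros)
    have "(W has_real_derivative
        - (x - y) * deriv f (y + u * (x - y))
        + deriv (deriv f) (y + u * (x - y)) * (x - y) * ((1 - u) * (x - y))
        + deriv f (y + u * (x - y)) * (x - y)) (at u)"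
      unfolding W_def
      by (intro DERIV_add DERIV_mult DERIV_chain2[OF Fc_deriv2[OF assms(1) pos] line]
          DERIV_chain2[OF Fc_deriv[OF assms(1) pos] line]) (auto intro!: derivative_eq_intros)
    then have "(W has_real_derivative (1 - u) * (x - y)\<^sup>2 * deriv (deriv f) (y + u * (x - y))) (at u)"
      by (rule DERIV_cong) (simp add: algebra_simps power2_eq_square)
    then show "(W has_vector_derivative (1 - u) * (x - y)\<^sup>2 * deriv (deriv f) (y + u * (x - y)))
        (at u within {0..1})"
      by (simp add: has_real_derivative_iff_has_vector_derivative has_vector_derivative_at_within)
  qed simp
  moreover have "W 1 - W 0 = bregman f x y" by (simp add: W_def bregman_def algebra_simps)
  ultimately show ?thesis by simp
qed

lemma bregman_convex:
  assumes f: "Fc f" and pos: "x1 > 0" "y1 > 0" "x2 > 0" "y2 > 0" and l: "0 \<le> l" "l \<le> 1"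
  shows "bregman f ((1 - l) * x1 + l * x2) ((1 - l) * y1 + l * y2)
           \<le> (1 - l) * bregman f x1 y1 + l * bregman f x2 y2"
proof -
  define x where "x = (1 - l) * x1 + l * x2"
  define y where "y = (1 - l) * y1 + l * y2"
  define k where "k a b u = (1 - u) * (a - b)\<^sup>2 * deriv (deriv f) (b + u * (a - b))" for a b u :: real
  have "x > 0" "y > 0" using pos l by (auto simp: x_def y_def intro: convex_combination_pos)
  have "(k x y has_integral bregman f x y) {0..1}"
    unfolding k_def using \<open>x > 0\<close> \<open>y > 0\<close> by (rule bregman_has_integral[OF f])
  moreover have "((\<lambda>u. (1 - l) * k x1 y1 u + l * k x2 y2 u) has_integral
      (1 - l) * bregman f x1 y1 + l * bregman f x2 y2) {0..1}"
    unfolding k_def using pos by (intro has_integral_add has_integral_mult_right bregman_has_integral[OF f])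
  moreover have "k x y u \<le> (1 - l) * k x1 y1 u + l * k x2 y2 u" if u: "u \<in> {0..1}" for u
  proof -
    define \<psi> where "\<psi> z = 1 / deriv (deriv f) z" for z
    define z where "z a b = b + u * (a - b)" for a b :: real
    have z_pos: "z a b > 0" if "a > 0" "b > 0" for a b
      using that u convex_combination_pos[of b a u] by (simp add: z_def algebra_simps)
    have \<psi>_pos: "\<psi> (z a b) > 0" if "a > 0" "b > 0" for a b
      using Fc_deriv2_pos[OF f z_pos[OF that]] by (simp add: \<psi>_def)
    have k_eq: "k a b u = (1 - u) * ((a - b)\<^sup>2 / \<psi> (z a b))" for a b
      by (simp add: k_def \<psi>_def z_def)
    have z_comb: "z x y = (1 - l) * z x1 y1 + l * z x2 y2"
      and diff_comb: "x - y = (1 - l) * (x1 - y1) + l * (x2 - y2)"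
      by (simp_all add: z_def x_def y_def algebra_simps)
    have "(1 - l) * \<psi> (z x1 y1) + l * \<psi> (z x2 y2) \<le> \<psi> (z x y)"
      using concave_onD[OF Fc_inverse_deriv2_concave[OF f], of l "z x1 y1" "z x2 y2"] l z_pos pos
      by (simp add: \<psi>_def z_comb)
    then have "(x - y)\<^sup>2 / \<psi> (z x y)
        \<le> (1 - l) * ((x1 - y1)\<^sup>2 / \<psi> (z x1 y1)) + l * ((x2 - y2)\<^sup>2 / \<psi> (z x2 y2))"
      unfolding diff_comb using pos l by (intro quadratic_over_linear_convex \<psi>_pos)
    then have "(1 - u) * ((x - y)\<^sup>2 / \<psi> (z x y)) \<le> (1 - u) *
        ((1 - l) * ((x1 - y1)\<^sup>2 / \<psi> (z x1 y1)) + l * ((x2 - y2)\<^sup>2 / \<psi> (z x2 y2)))"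
      using u by (intro mult_left_mono) auto
    then show ?thesis unfolding k_eq by (simp add: algebra_simps)
  qed
  ultimately show ?thesis unfolding x_def y_def by (rule has_integral_le)
qed

definition bregman_tangent :: "(real \<Rightarrow> real) \<Rightarrow> real \<Rightarrow> real \<Rightarrow> real \<Rightarrow> real \<Rightarrow> real" where
  "bregman_tangent f x0 y0 x y =
     bregman f x0 y0 + (deriv f x0 - deriv f y0) * (x - x0) - deriv (deriv f) y0 * (x0 - y0) * (y - y0)"

lemma bregman_convex_on_line:
  assumes f: "Fc f"
  shows "convex_on {t. 0 < x0 + t * a \<and> 0 < y0 + t * b} (\<lambda>t. bregman f (x0 + t * a) (y0 + t * b))"
proof -
  define X where "X t = x0 + t * a" for t
  define Y where "Y t = y0 + t * b" for t
  have X_comb: "X ((1 - l) * s + l * t) = (1 - l) * X s + l * X t"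
    and Y_comb: "Y ((1 - l) * s + l * t) = (1 - l) * Y s + l * Y t" for l s t
    by (simp_all add: X_def Y_def algebra_simps)
  have comb: "(1 - l) * s + l * t \<in> {t. 0 < X t \<and> 0 < Y t}"
    if "s \<in> {t. 0 < X t \<and> 0 < Y t}" "t \<in> {t. 0 < X t \<and> 0 < Y t}" "0 \<le> l" "l \<le> 1" for l s t
    using that by (auto simp: X_comb Y_comb intro: convex_combination_pos)
  have "convex_on {t. 0 < X t \<and> 0 < Y t} (\<lambda>t. bregman f (X t) (Y t))"
  proof (rule convex_onI)
    fix l s t :: real assume "0 < l" "l < 1" "s \<in> {t. 0 < X t \<and> 0 < Y t}" "t \<in> {t. 0 < X t \<and> 0 < Y t}"
    then show "bregman f (X ((1 - l) *\<^sub>R s + l *\<^sub>R t)) (Y ((1 - l) *\<^sub>R s + l *\<^sub>R t))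
        \<le> (1 - l) * bregman f (X s) (Y s) + l * bregman f (X t) (Y t)"
      using bregman_convex[OF f, of "X s" "Y s" "X t" "Y t" l] by (simp add: X_comb Y_comb)
  next
    show "convex {t. 0 < X t \<and> 0 < Y t}" unfolding convex_alt using comb by (simp add: mult.commute)
  qed
  then show ?thesis by (simp add: X_def Y_def)
qed

lemma bregman_line_has_derivative:
  assumes f: "Fc f" and "x0 > 0" "y0 > 0"
  shows "((\<lambda>t. bregman f (x0 + t * a) (y0 + t * b)) has_real_derivative
      (deriv f x0 - deriv f y0) * a - deriv (deriv f) y0 * (x0 - y0) * b) (at 0)"
proof -
  have X: "((\<lambda>t. x0 + t * a) has_real_derivative a) (at 0)"
    and Y: "((\<lambda>t. y0 + t * b) has_real_derivative b) (at 0)"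
    by (auto intro!: derivative_eq_intros)
  have fX: "((\<lambda>t. f (x0 + t * a)) has_real_derivative deriv f x0 * a) (at 0)"
    using DERIV_chain2[OF Fc_deriv[OF f, of "x0 + 0 * a"] X] assms by simp
  have fY: "((\<lambda>t. f (y0 + t * b)) has_real_derivative deriv f y0 * b) (at 0)"
    using DERIV_chain2[OF Fc_deriv[OF f, of "y0 + 0 * b"] Y] assms by simp
  have f'Y: "((\<lambda>t. deriv f (y0 + t * b)) has_real_derivative deriv (deriv f) y0 * b) (at 0)"
    using DERIV_chain2[OF Fc_deriv2[OF f, of "y0 + 0 * b"] Y] assms by simp
  have "((\<lambda>t. bregman f (x0 + t * a) (y0 + t * b)) has_real_derivative deriv f x0 * a - deriv f y0 * b
      - (deriv (deriv f) y0 * b * (x0 + 0 * a - (y0 + 0 * b)) + (a - b) * deriv f (y0 + 0 * b))) (at 0)"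
    unfolding bregman_def by (intro DERIV_diff[OF DERIV_diff[OF fX fY] DERIV_mult[OF f'Y]] DERIV_diff X Y)
  then show ?thesis by (rule DERIV_cong) (simp add: algebra_simps)
qed

lemma bregman_above_tangent:
  assumes f: "Fc f" and pos: "x > 0" "y > 0" "x0 > 0" "y0 > 0"
  shows "bregman_tangent f x0 y0 x y \<le> bregman f x y"
proof -
  define A where "A = {t. 0 < x0 + t * (x - x0) \<and> 0 < y0 + t * (y - y0)}"
  define \<phi> where "\<phi> t = bregman f (x0 + t * (x - x0)) (y0 + t * (y - y0))" for t
  have "convex_on A \<phi>" unfolding A_def \<phi>_def by (rule bregman_convex_on_line[OF f])
  have "open A" unfolding A_def by (intro open_Collect_conj open_Collect_less continuous_intros)
  have "0 \<in> A" "1 \<in> A" using pos by (simp_all add: A_def)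
  then have "0 \<in> interior A" using \<open>open A\<close> by (simp add: interior_open)
  have "(\<phi> has_real_derivative (deriv f x0 - deriv f y0) * (x - x0)
      - deriv (deriv f) y0 * (x0 - y0) * (y - y0)) (at 0 within A)"
    unfolding \<phi>_def by (rule has_field_derivative_at_within[OF bregman_line_has_derivative[OF f pos(3,4)]])
  from convex_on_imp_above_tangent[OF \<open>convex_on A \<phi>\<close> _ \<open>0 \<in> interior A\<close> \<open>1 \<in> A\<close> this]
  show ?thesis
    using convex_connected[OF convex_on_imp_convex[OF \<open>convex_on A \<phi>\<close>]]
    by (simp add: \<phi>_def bregman_tangent_def)
qed

lemma bregman_above_tangent_nonneg:
  assumes f: "Fc f" and "x \<ge> 0" "y > 0" "x0 > 0" "y0 > 0"
  shows "bregman_tangent f x0 y0 x y \<le> bregman f x y"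
proof (cases "x = 0")
  case False
  with assms show ?thesis by (intro bregman_above_tangent) auto
next
  case True
  have "((\<lambda>x. bregman f x y) \<longlongrightarrow> bregman f 0 y) (at_right 0)"
    unfolding bregman_def by (intro tendsto_intros Fc_tendsto_at_right_0[OF f])
  moreover have "((\<lambda>x. bregman_tangent f x0 y0 x y) \<longlongrightarrow> bregman_tangent f x0 y0 0 y) (at_right 0)"
    unfolding bregman_tangent_def by (intro tendsto_intros)
  moreover have "bregman_tangent f x0 y0 x' y \<le> bregman f x' y" if "0 < x'" "x' < 1" for x'
    using bregman_above_tangent[OF f that(1) assms(3-5)] .
  ultimately show ?thesis
    unfolding True by (rule tendsto_at_right_0_le[OF _ _ zero_less_one])
qed

lemma Fc_subgradient_eq_deriv:
  assumes f: "Fc f" and "q > 0" and sub: "\<And>z. z \<ge> 0 \<Longrightarrow> f q + t * (z - q) \<le> f z"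
  shows "t = deriv f q"
proof -
  have "deriv f q - t = 0"
  proof (rule DERIV_local_min[OF _ \<open>q > 0\<close>])
    show "((\<lambda>z. f z - t * z) has_real_derivative deriv f q - t) (at q)"
      using Fc_deriv[OF f \<open>q > 0\<close>] by (auto intro!: derivative_eq_intros)
    show "\<forall>z. \<bar>q - z\<bar> < q \<longrightarrow> f q - t * q \<le> f z - t * z"
      using sub by (auto simp: algebra_simps)
  qed
  then show ?thesis by simp
qed

lemma Fc_subgradient_0_le_deriv:
  assumes f: "Fc f" and sub: "\<And>z. z \<ge> 0 \<Longrightarrow> f 0 + t * z \<le> f z" and "y > 0"
  shows "t \<le> deriv f y"
proof -
  have "f 0 + t * y \<le> f y" "f y + deriv f y * (0 - y) \<le> f 0"
    using sub Fc_above_tangent[OF f \<open>y > 0\<close>, of 0] \<open>y > 0\<close> by auto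
  then have "t * y \<le> deriv f y * y" by (simp add: algebra_simps)
  with \<open>y > 0\<close> show ?thesis by simp
qed

lemma Fc_above_line_at_0:
  assumes f: "Fc f" and le: "\<And>y. y > 0 \<Longrightarrow> t \<le> deriv f y" and "x \<ge> 0"
  shows "f 0 + t * x \<le> f x"
proof (cases "x = 0")
  case False
  have "((\<lambda>y. f y + t * (x - y)) \<longlongrightarrow> f 0 + t * (x - 0)) (at_right 0)"
    by (intro tendsto_intros Fc_tendsto_at_right_0[OF f])
  moreover have "0 < x" using False \<open>x \<ge> 0\<close> by simp
  moreover have "f y + t * (x - y) \<le> f x" if "0 < y" "y < x" for y
  proof -
    have "t * (x - y) \<le> deriv f y * (x - y)" using le[of y] that by (intro mult_right_mono) auto
    with Fc_above_tangent[OF f \<open>0 < y\<close> \<open>x \<ge> 0\<close>] show ?thesis by simp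
  qed
  ultimately have "f 0 + t * (x - 0) \<le> f x"
    by (rule tendsto_at_right_0_le[OF tendsto_const])
  then show ?thesis by simp
qed simp

lemma bregman_tangent_le_subgradient:
  assumes f: "Fc f" and "x \<ge> 0" "q \<ge> 0" "x0 > 0" "y0 > 0"
    and sub: "\<And>z. z \<ge> 0 \<Longrightarrow> f q + t * (z - q) \<le> f z"
  shows "bregman_tangent f x0 y0 x q \<le> f x - f q - t * (x - q)"
proof (cases "q = 0")
  case False
  then have "t = deriv f q" using Fc_subgradient_eq_deriv[OF f _ sub] assms by simp
  with False assms show ?thesis
    using bregman_above_tangent_nonneg[OF f, of x q x0 y0] by (simp add: bregman_def)
next
  case True
  have "((\<lambda>y. bregman_tangent f x0 y0 x y + (f y - f 0 - y * deriv f y))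
      \<longlongrightarrow> bregman_tangent f x0 y0 x 0 + (f 0 - f 0 - 0)) (at_right 0)"
    unfolding bregman_tangent_def
    by (intro tendsto_intros Fc_tendsto_at_right_0[OF f] Fc_tendsto_mult_deriv[OF f])
  moreover have "bregman_tangent f x0 y0 x y + (f y - f 0 - y * deriv f y) \<le> f x - f 0 - t * x"
    if "0 < y" "y < 1" for y
  proof -
    have "t \<le> deriv f y" using Fc_subgradient_0_le_deriv[OF f _ \<open>0 < y\<close>] sub True by simp
    then have "t * x \<le> deriv f y * x" using \<open>x \<ge> 0\<close> by (rule mult_right_mono)
    with bregman_above_tangent_nonneg[OF f \<open>x \<ge> 0\<close> \<open>0 < y\<close> assms(4,5)]
    show ?thesis by (simp add: bregman_def algebra_simps)
  qed
  ultimately have "bregman_tangent f x0 y0 x 0 + (f 0 - f 0 - 0) \<le> f x - f 0 - t * x"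
    by (rule tendsto_at_right_0_le[OF tendsto_const _ zero_less_one])
  with True show ?thesis by simp
qed

section \<open>The Legendre transform and its subgradients\<close>

lemma fenchel_young: "x \<ge> 0 \<Longrightarrow> ereal (x * t - f x) \<le> fstar f t"
  unfolding fstar_def by (rule SUP_upper) simp

lemma fstar_leI: "(\<And>x. x \<ge> 0 \<Longrightarrow> x * t - f x \<le> c) \<Longrightarrow> fstar f t \<le> ereal c"
  unfolding fstar_def by (rule SUP_least) simp

lemma fstar_neq_minf: "fstar f t \<noteq> -\<infinity>"
  using fenchel_young[of 0 t f] by auto

lemma Fc_fstar_ge: "Fc f \<Longrightarrow> ereal t \<le> fstar f t"
  using fenchel_young[of 1 t f] Fc_one[of f] by simp

lemma Fc_fstar_deriv:
  assumes "Fc f" "m > 0"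
  shows "fstar f (deriv f m) = ereal (m * deriv f m - f m)"
proof (rule antisym)
  show "fstar f (deriv f m) \<le> ereal (m * deriv f m - f m)"
    using Fc_above_tangent[OF assms] by (intro fstar_leI) (simp add: algebra_simps)
  show "ereal (m * deriv f m - f m) \<le> fstar f (deriv f m)"
    using fenchel_young[of m] assms by simp
qed

lemma Fc_fstar_le_deriv_1:
  assumes "Fc f" "u \<le> deriv f 1"
  shows "fstar f u \<le> ereal (deriv f 1)"
proof (rule fstar_leI)
  fix x :: real assume "x \<ge> 0"
  then have "x * u \<le> x * deriv f 1" using assms(2) by (intro mult_left_mono)
  with Fc_above_tangent_1[OF assms(1) \<open>x \<ge> 0\<close>] show "x * u - f x \<le> deriv f 1"
    by (simp add: algebra_simps)
qed

lemma Fc_ex_fstar_le: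
  assumes f: "Fc f" and "e > 0"
  shows "\<exists>u. fstar f u \<le> ereal (e - f 0)"
proof -
  obtain d where "d > 0" and d: "\<And>x. 0 < x \<Longrightarrow> x < d \<Longrightarrow> f 0 - e < f x"
    using order_tendstoD(1)[OF Fc_tendsto_at_right_0[OF f], of "f 0 - e"] \<open>e > 0\<close>
    by (auto simp: eventually_at_right_field)
  define \<delta> where "\<delta> = d / 2"
  have "\<delta> > 0" using \<open>d > 0\<close> by (simp add: \<delta>_def)
  have near_0: "f 0 - e \<le> f x" if "0 \<le> x" "x \<le> \<delta>" for x
    using that d[of x] \<open>d > 0\<close> \<open>e > 0\<close> by (cases "x = 0") (auto simp: \<delta>_def)
  \<comment> \<open>For \<open>u \<le> min 0 (f'(\<delta>))\<close> the supremum defining \<open>f*(u)\<close> is controlled by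
    \<open>x \<le> \<delta>\<close>, where \<open>f > f(0) - e\<close>.\<close>
  define u where "u = min 0 (deriv f \<delta>)"
  have "fstar f u \<le> ereal (e - f 0)"
  proof (rule fstar_leI)
    fix x :: real assume "x \<ge> 0"
    show "x * u - f x \<le> e - f 0"
    proof (cases "x \<le> \<delta>")
      case True
      have "x * u \<le> 0" using \<open>x \<ge> 0\<close> by (simp add: u_def mult_nonneg_nonpos)
      with near_0[OF \<open>x \<ge> 0\<close> True] show ?thesis by linarith
    next
      case False
      have "(x - \<delta>) * (u - deriv f \<delta>) \<le> 0" "\<delta> * u \<le> 0"
        using False \<open>\<delta> > 0\<close> by (auto simp: u_def mult_nonneg_nonpos)
      with Fc_above_tangent[OF f \<open>\<delta> > 0\<close> \<open>x \<ge> 0\<close>] near_0[of \<delta>] \<open>\<delta> > 0\<close>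
      show ?thesis by (simp add: algebra_simps)
    qed
  qed
  then show ?thesis ..
qed

lemma
  assumes f: "Fc f" and r: "fstar f t = ereal r" and sg: "fstar_subgrad f t q"
  shows fstar_subgrad_nonneg: "q \<ge> 0"
    and fstar_subgrad_eq: "r = q * t - f q"
proof -
  have sg_r: "ereal (r + q * (u - t)) \<le> fstar f u" for u
    using sg r unfolding fstar_subgrad_def by (metis plus_ereal.simps(1))
  show "q \<ge> 0"
  proof (rule ccontr)
    \<comment> \<open>\<open>f*\<close> is bounded by \<open>f'(1)\<close> on \<open>(-\<infinity>, f'(1)]\<close>, while a negative subgradient forces
      it to grow as \<open>u \<rightarrow> -\<infinity>\<close>.\<close>
    assume "\<not> q \<ge> 0"
    define K where "K = \<bar>r\<bar> + \<bar>deriv f 1\<bar> + 1"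
    define u where "u = min t (deriv f 1) - K / (- q)"
    have "K / (- q) > 0" using \<open>\<not> q \<ge> 0\<close> by (intro divide_pos_pos) (auto simp: K_def)
    then have "u \<le> deriv f 1" by (simp add: u_def)
    have "K = (- q) * (K / (- q))" using \<open>\<not> q \<ge> 0\<close> by simp
    also have "\<dots> \<le> (- q) * (t - u)"
      using \<open>\<not> q \<ge> 0\<close> by (intro mult_left_mono) (auto simp: u_def)
    finally have "K \<le> q * (u - t)" by (simp add: algebra_simps)
    moreover have "r + q * (u - t) \<le> deriv f 1"
      using order_trans[OF sg_r[of u] Fc_fstar_le_deriv_1[OF f \<open>u \<le> deriv f 1\<close>]] by simp
    ultimately show False by (simp add: K_def)
  qed
  have "r \<le> q * t - f q"
  proof (cases "q = 0")
    case False
    with \<open>q \<ge> 0\<close> have "q > 0" by simp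
    with sg_r[of "deriv f q"] show ?thesis
      by (simp add: Fc_fstar_deriv[OF f] algebra_simps)
  next
    case True
    have "r \<le> e - f 0" if "e > 0" for e
    proof -
      obtain u where "fstar f u \<le> ereal (e - f 0)" using Fc_ex_fstar_le[OF f \<open>e > 0\<close>] ..
      with sg_r[of u] have "ereal (r + q * (u - t)) \<le> ereal (e - f 0)" by (rule order_trans)
      with True show ?thesis by simp
    qed
    then have "r \<le> - f 0" using field_le_epsilon[of r "- f 0"] by simp
    with True show ?thesis by simp
  qed
  moreover have "q * t - f q \<le> r" using fenchel_young[OF \<open>q \<ge> 0\<close>, of t f] r by simp
  ultimately show "r = q * t - f q" by simp
qed

lemma fstar_subgrad_supporting_line:
  assumes "Fc f" "fstar f t = ereal r" "fstar_subgrad f t q" "z \<ge> 0"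
  shows "f q + t * (z - q) \<le> f z"
  using fenchel_young[OF assms(4), of t f] fstar_subgrad_eq[OF assms(1-3)] assms(2)
  by (simp add: algebra_simps)

lemma fstar_subgrad_0_le_deriv:
  assumes "Fc f" "fstar f t = ereal r" "fstar_subgrad f t 0" "y > 0"
  shows "t \<le> deriv f y"
  using fstar_subgrad_supporting_line[OF assms(1-3)]
  by (intro Fc_subgradient_0_le_deriv[OF assms(1) _ assms(4)]) simp

lemma fstar_subgrad_bregman_bound:
  assumes f: "Fc f" and r: "fstar f t = ereal r" and sg: "fstar_subgrad f t q"
    and "x \<ge> 0" "m > 0"
  shows "x * t - r \<le> f x - bregman_tangent f 1 m x q"
proof -
  have "bregman_tangent f 1 m x q \<le> f x - f q - t * (x - q)"
    using fstar_subgrad_supporting_line[OF f r sg] fstar_subgrad_nonneg[OF f r sg] assms(4,5)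
    by (intro bregman_tangent_le_subgradient[OF f]) auto
  then show ?thesis using fstar_subgrad_eq[OF f r sg] by (simp add: algebra_simps)
qed

lemma fstar_subgrad_0_bound:
  assumes f: "Fc f" and r: "fstar f t = ereal r" and sg: "fstar_subgrad f t 0"
    and "x \<ge> 0" "t \<le> c"
  shows "x * t - r \<le> f x + c + f 0 + (c - deriv f 1) * (x - 1)"
proof -
  have "x * t \<le> x * c" using assms(4,5) by (intro mult_left_mono)
  with Fc_above_tangent_1[OF f \<open>x \<ge> 0\<close>] fstar_subgrad_eq[OF f r sg] show ?thesis
    by (simp add: algebra_simps)
qed

lemma fder_pos: "m > 0 \<Longrightarrow> fder f m = deriv f m"
  by (simp add: fder_def)

lemma
  assumes f: "Fc f" and t: "\<And>y. y > 0 \<Longrightarrow> t \<le> deriv f y"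
  shows Fc_fder_0_ge: "t \<le> fder f 0"
    and Fc_fstar_fder_0: "fstar f (fder f 0) = ereal (- f 0)"
proof -
  have "bdd_below (deriv f ` {0<..})" using t by (auto intro!: bdd_belowI)
  then have le: "fder f 0 \<le> deriv f y" if "y > 0" for y
    using that by (auto simp: fder_def intro!: cInf_lower)
  show "t \<le> fder f 0" unfolding fder_def using t by (auto intro!: cInf_greatest)
  show "fstar f (fder f 0) = ereal (- f 0)"
  proof (rule antisym)
    show "fstar f (fder f 0) \<le> ereal (- f 0)"
      using Fc_above_line_at_0[OF f le] by (intro fstar_leI) (simp add: algebra_simps)
    show "ereal (- f 0) \<le> fstar f (fder f 0)" using fenchel_young[of 0 "fder f 0" f] by simp
  qed
qed

section \<open>Tangents of f at truncated points\<close>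

definition cutoff :: "nat \<Rightarrow> real \<Rightarrow> real" where
  "cutoff n x = max (1 / real (Suc n)) (min (real (Suc n)) x)"

lemma cutoff_pos: "0 < cutoff n x"
  by (auto simp: cutoff_def less_max_iff_disj)

lemma cutoff_bounds: "1 / real (Suc n) \<le> cutoff n x" "cutoff n x \<le> real (Suc n)"
  by (auto simp: cutoff_def field_simps)

lemma continuous_on_cutoff_comp:
  assumes "continuous_on {0<..} F"
  shows "continuous_on UNIV (\<lambda>x. F (cutoff n x))"
  unfolding cutoff_def
  by (rule continuous_on_compose2[OF assms]) (auto intro!: continuous_intros simp: less_max_iff_disj)

lemma Fc_tangent_1_le_tangent:
  assumes f: "Fc f" and "c > 0" "x < c \<Longrightarrow> c \<le> 1" "c < x \<Longrightarrow> 1 \<le> c"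
  shows "deriv f 1 * (x - 1) \<le> f c + deriv f c * (x - c)"
proof -
  have "0 \<le> (deriv f c - deriv f 1) * (x - c)"
  proof (cases x c rule: linorder_cases)
    case less
    with assms Fc_deriv_mono[OF f, of c 1] show ?thesis by (simp add: mult_nonpos_nonpos)
  next
    case greater
    with assms Fc_deriv_mono[OF f, of 1 c] show ?thesis by simp
  qed simp
  with Fc_above_tangent_1[OF f, of c] \<open>c > 0\<close> show ?thesis by (simp add: algebra_simps)
qed

lemma Fc_cutoff_tangent_abs_le:
  assumes "Fc f" "x \<ge> 0"
  shows "\<bar>f (cutoff n x) + deriv f (cutoff n x) * (x - cutoff n x)\<bar> \<le> \<bar>f x\<bar> + \<bar>deriv f 1 * (x - 1)\<bar>"
proof -
  define b where "b = real (Suc n)"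
  have "1 / b \<le> 1" "1 \<le> b" "1 / b \<le> b" by (simp_all add: b_def field_simps)
  then have "x < cutoff n x \<Longrightarrow> cutoff n x \<le> 1" "cutoff n x < x \<Longrightarrow> 1 \<le> cutoff n x"
    unfolding cutoff_def b_def[symmetric] by (auto simp: max_def min_def)
  then have "deriv f 1 * (x - 1) \<le> f (cutoff n x) + deriv f (cutoff n x) * (x - cutoff n x)"
    by (rule Fc_tangent_1_le_tangent[OF assms(1) cutoff_pos])
  moreover have "f (cutoff n x) + deriv f (cutoff n x) * (x - cutoff n x) \<le> f x"
    using Fc_above_tangent[OF assms(1) cutoff_pos assms(2)] by simp
  ultimately show ?thesis by linarith
qed

lemma Fc_abs_deriv_cutoff_le:
  assumes "Fc f"
  shows "\<bar>deriv f (cutoff n x)\<bar> \<le> \<bar>deriv f (1 / Suc n)\<bar> + \<bar>deriv f (Suc n)\<bar>"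
proof -
  have "deriv f (1 / Suc n) \<le> deriv f (cutoff n x)" "deriv f (cutoff n x) \<le> deriv f (Suc n)"
    using Fc_deriv_mono[OF assms] cutoff_bounds cutoff_pos by auto
  then show ?thesis by linarith
qed

lemma Fc_borel_measurable_cutoff:
  assumes f: "Fc f" and u: "u \<in> borel_measurable M"
  shows "(\<lambda>x. f (cutoff n (u x))) \<in> borel_measurable M"
    and "(\<lambda>x. deriv f (cutoff n (u x))) \<in> borel_measurable M"
proof -
  have "continuous_on {0<..} f" by (rule continuous_on_subset[OF Fc_continuous[OF f]]) auto
  with u show "(\<lambda>x. f (cutoff n (u x))) \<in> borel_measurable M"
    using continuous_on_cutoff_comp by (intro measurable_compose[OF u] borel_measurable_continuous_onI)
  show "(\<lambda>x. deriv f (cutoff n (u x))) \<in> borel_measurable M"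
    using continuous_on_cutoff_comp[OF Fc_deriv_continuous_on[OF f]]
    by (intro measurable_compose[OF u] borel_measurable_continuous_onI)
qed

lemma Fc_cutoff_tangent_tendsto:
  assumes f: "Fc f" and "x \<ge> 0"
  shows "(\<lambda>n. f (cutoff n x) + deriv f (cutoff n x) * (x - cutoff n x)) \<longlonglongrightarrow> f x"
proof (cases "x = 0")
  case False
  with \<open>x \<ge> 0\<close> obtain n1 n2 :: nat where "inverse (Suc n1) < x" "x \<le> n2"
    using reals_Archimedean real_arch_simple by (metis less_eq_real_def)
  then have "cutoff n x = x" if "n \<ge> max n1 n2" for n
  proof -
    have "1 / Suc n \<le> inverse (Suc n1)" using that by (simp add: inverse_eq_divide frac_le)
    moreover have "real n2 \<le> Suc n" using that by simp
    ultimately show ?thesis using \<open>inverse (Suc n1) < x\<close> \<open>x \<le> n2\<close> by (simp add: cutoff_def)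
  qed
  then have "\<forall>\<^sub>F n in sequentially. f (cutoff n x) + deriv f (cutoff n x) * (x - cutoff n x) = f x"
    unfolding eventually_sequentially by (intro exI[of _ "max n1 n2"]) simp
  then show ?thesis by (rule tendsto_eventually)
next
  case True
  have "filterlim (\<lambda>n. 1 / real (Suc n)) (at_right 0) sequentially"
    by (intro tendsto_imp_filterlim_at_right LIMSEQ_Suc[OF lim_const_over_n]) auto
  then have "(\<lambda>n. f (1 / Suc n) - 1 / Suc n * deriv f (1 / Suc n)) \<longlonglongrightarrow> f 0 - 0"
    by (intro tendsto_intros filterlim_compose[OF Fc_tendsto_at_right_0[OF f]]
        filterlim_compose[OF Fc_tendsto_mult_deriv[OF f]])
  then show ?thesis
    using True by (simp add: cutoff_def algebra_simps)
qed

section \<open>Integrals and Radon-Nikodym densities\<close>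

lemma enn2ereal_eq_ereal_enn2real: "(a::ennreal) \<noteq> \<infinity> \<Longrightarrow> enn2ereal a = ereal (enn2real a)"
  by (cases a rule: ennreal_cases) auto

lemma eint_ereal:
  assumes "integrable M X"
  shows "eint M (\<lambda>x. ereal (X x)) = ereal (\<integral>x. X x \<partial>M)"
proof -
  have "(\<integral>\<^sup>+ x. ennreal (X x) \<partial>M) \<noteq> \<infinity>" "(\<integral>\<^sup>+ x. ennreal (- X x) \<partial>M) \<noteq> \<infinity>"
    using assms by (auto simp: real_integrable_def)
  then show ?thesis
    unfolding eint_def real_lebesgue_integral_def[OF assms] by (simp add: enn2ereal_eq_ereal_enn2real)
qed

lemma eint_cong_AE: "AE x in M. H x = H' x \<Longrightarrow> eint M H = eint M H'"
  unfolding eint_def by (intro arg_cong2[where f = "\<lambda>a b. enn2ereal a - enn2ereal b"]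
      nn_integral_cong_AE; erule eventually_mono; simp)

lemma eint_le_integral:
  assumes X: "X \<in> borel_measurable M" and Y: "integrable M Y" and le: "AE x in M. X x \<le> Y x"
  shows "eint M (\<lambda>x. ereal (X x)) \<le> ereal (\<integral>x. Y x \<partial>M)"
proof (cases "integrable M X")
  case True
  then show ?thesis using integral_mono_AE[OF True Y le] by (simp add: eint_ereal)
next
  case False
  have "(\<integral>\<^sup>+ x. ennreal (X x) \<partial>M) \<le> (\<integral>\<^sup>+ x. ennreal (Y x) \<partial>M)"
    using le by (intro nn_integral_mono_AE) (auto intro: ennreal_leI)
  moreover have "(\<integral>\<^sup>+ x. ennreal (Y x) \<partial>M) \<noteq> \<infinity>" using Y by (auto simp: real_integrable_def)
  ultimately have "(\<integral>\<^sup>+ x. ennreal (X x) \<partial>M) \<noteq> \<infinity>" by (auto simp: top_unique)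
  moreover from this have "(\<integral>\<^sup>+ x. ennreal (- X x) \<partial>M) = \<infinity>"
    using False X by (auto simp: real_integrable_def)
  ultimately have "eint M (\<lambda>x. ereal (X x)) = -\<infinity>"
    unfolding eint_def by (simp add: enn2ereal_eq_ereal_enn2real)
  then show ?thesis by simp
qed

lemma integrable_if_eint_less_top:
  assumes X: "X \<in> borel_measurable M" and Y: "integrable M Y" and le: "\<And>x. Y x \<le> X x"
    and less: "eint M (\<lambda>x. ereal (X x)) < \<infinity>"
  shows "integrable M X"
proof -
  have "(\<integral>\<^sup>+ x. ennreal (- X x) \<partial>M) \<le> (\<integral>\<^sup>+ x. ennreal (- Y x) \<partial>M)"
    using le by (intro nn_integral_mono ennreal_leI) simp
  moreover have "(\<integral>\<^sup>+ x. ennreal (- Y x) \<partial>M) \<noteq> \<infinity>" using Y by (auto simp: real_integrable_def)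
  ultimately have neg: "(\<integral>\<^sup>+ x. ennreal (- X x) \<partial>M) \<noteq> \<infinity>" by (auto simp: top_unique)
  with less have "(\<integral>\<^sup>+ x. ennreal (X x) \<partial>M) \<noteq> \<infinity>"
    unfolding eint_def by (auto simp: enn2ereal_eq_ereal_enn2real)
  with X neg show ?thesis by (simp add: real_integrable_def)
qed

lemma
  assumes E: "eintegrable M H" and not_minf: "\<And>x. H x \<noteq> -\<infinity>"
  shows eintegrable_AE_finite: "AE x in M. H x = ereal (real_of_ereal (H x))"
    and eintegrable_integrable_real: "integrable M (\<lambda>x. real_of_ereal (H x))"
    and eintegrable_eint_eq: "eint M H = ereal (\<integral>x. real_of_ereal (H x) \<partial>M)"
proof -
  have Hm: "H \<in> borel_measurable M" and pos: "(\<integral>\<^sup>+ x. e2ennreal (H x) \<partial>M) < \<infinity>"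
    and neg: "(\<integral>\<^sup>+ x. e2ennreal (- H x) \<partial>M) < \<infinity>"
    using E by (auto simp: eintegrable_def)
  have "AE x in M. e2ennreal (H x) \<noteq> \<infinity>"
    using pos by (intro nn_integral_PInf_AE) (auto intro: measurable_compose[OF Hm measurable_e2ennreal])
  then show ae: "AE x in M. H x = ereal (real_of_ereal (H x))"
    by (rule eventually_mono) (use not_minf in \<open>auto simp: ereal_real\<close>)
  have "(\<integral>\<^sup>+ x. ennreal (real_of_ereal (H x)) \<partial>M) = (\<integral>\<^sup>+ x. e2ennreal (H x) \<partial>M)"
    "(\<integral>\<^sup>+ x. ennreal (- real_of_ereal (H x)) \<partial>M) = (\<integral>\<^sup>+ x. e2ennreal (- H x) \<partial>M)"
    using ae by (auto intro!: nn_integral_cong_AE elim!: eventually_mono)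
      (metis e2ennreal_ereal uminus_ereal.simps(1))+
  with Hm pos neg show int: "integrable M (\<lambda>x. real_of_ereal (H x))"
    by (simp add: real_integrable_def less_top)
  show "eint M H = ereal (\<integral>x. real_of_ereal (H x) \<partial>M)"
    using eint_cong_AE[OF ae] eint_ereal[OF int] by simp
qed

lemma nn_integral_RN_deriv_real:
  assumes P: "sigma_finite_measure P" and N: "sigma_finite_measure N"
    and sets: "sets N = sets P" and ac: "absolutely_continuous P N"
    and h: "h \<in> borel_measurable P"
  shows "(\<integral>\<^sup>+ x. ennreal (h x) \<partial>N) = (\<integral>\<^sup>+ x. ennreal (enn2real (RN_deriv P N x) * h x) \<partial>P)"
proof -
  interpret P: sigma_finite_measure P by fact
  have "AE x in P. RN_deriv P N x \<noteq> \<infinity>" by (rule P.RN_deriv_finite[OF N ac sets])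
  then have RN: "AE x in P. RN_deriv P N x = ennreal (enn2real (RN_deriv P N x))"
    by (rule eventually_mono) (simp add: ennreal_enn2real_if)
  have "(\<integral>\<^sup>+ x. ennreal (h x) \<partial>N) = (\<integral>\<^sup>+ x. RN_deriv P N x * ennreal (h x) \<partial>P)"
    by (rule P.RN_deriv_nn_integral[OF ac sets]) (use h in measurable)
  also have "\<dots> = (\<integral>\<^sup>+ x. ennreal (enn2real (RN_deriv P N x) * h x) \<partial>P)"
    using RN by (intro nn_integral_cong_AE) (auto elim!: eventually_mono simp: ennreal_mult')
  finally show ?thesis .
qed

section \<open>The dual representation\<close>

lemma Dtilde_le_eint:
  assumes "Fc f" "eintegrable P (\<lambda>x. fstar f (h x))"
  shows "Dtilde f fsd P h \<le> eint P (\<lambda>x. fstar f (h x))"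
proof -
  have "e + ereal d - fstar f d \<le> e" for e d
    using Fc_fstar_ge[OF assms(1), of d] fstar_neq_minf[of f d] by (cases "fstar f d"; cases e) auto
  with assms(2) show ?thesis by (simp add: Dtilde_def Let_def)
qed

locale fdiv_density = prob_space P for P :: "'a measure" +
  fixes f :: "real \<Rightarrow> real" and N :: "'a measure" and g :: "'a \<Rightarrow> real"
  assumes Fc: "Fc f"
    and g_measurable [measurable]: "g \<in> borel_measurable P"
    and g_nonneg: "\<And>x. 0 \<le> g x"
    and g_integrable: "integrable P g"
    and g_integral: "(\<integral>x. g x \<partial>P) = 1"
    and eint_N: "\<And>h. h \<in> borel_measurable P \<Longrightarrow>
      eint N (\<lambda>x. ereal (h x)) = eint P (\<lambda>x. ereal (g x * h x))"
    and f_g_integrable: "integrable P (\<lambda>x. f (g x))"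
begin

lemma dual_obj_le_of_pointwise:
  assumes h: "h \<in> borel_measurable P"
    and D: "Dtilde f fsd P h = ereal ((\<integral>x. H x \<partial>P) + k)"
    and H: "integrable P H" and Z: "integrable P Z" "(\<integral>x. Z x \<partial>P) = k"
    and le: "AE x in P. g x * h x - H x \<le> f (g x) + Z x"
  shows "dual_obj f fsd N P h \<le> ereal (\<integral>x. f (g x) \<partial>P)"
proof -
  have "(\<lambda>x. g x * h x) \<in> borel_measurable P" using h by measurable
  then have "eint N (\<lambda>x. ereal (h x)) \<le> ereal (\<integral>x. f (g x) + Z x + H x \<partial>P)"
    unfolding eint_N[OF h] using le H Z f_g_integrable
    by (intro eint_le_integral) (auto elim!: eventually_mono)
  also have "\<dots> = ereal ((\<integral>x. f (g x) \<partial>P) + ((\<integral>x. H x \<partial>P) + k))"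
    using H Z f_g_integrable by (simp add: algebra_simps)
  finally show ?thesis
    by (cases "eint N (\<lambda>x. ereal (h x))") (auto simp: dual_obj_def D)
qed

lemma dual_obj_le_mean_pos:
  assumes h: "h \<in> borel_measurable P" and H: "integrable P H"
    and good: "AE x in P. fstar f (h x) = ereal (H x) \<and> fstar_subgrad f (h x) (q x)"
    and q: "integrable P q" and m: "(\<integral>x. q x \<partial>P) = m" "m > 0"
    and D: "Dtilde f fsd P h = ereal (\<integral>x. H x \<partial>P) + ereal (fder f m) - fstar f (fder f m)"
  shows "dual_obj f fsd N P h \<le> ereal (\<integral>x. f (g x) \<partial>P)"
proof (rule dual_obj_le_of_pointwise[OF h _ H, where k = "- bregman f 1 m"
      and Z = "\<lambda>x. - bregman_tangent f 1 m (g x) (q x)"])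
  show "Dtilde f fsd P h = ereal ((\<integral>x. H x \<partial>P) + - bregman f 1 m)"
    using Fc_one[OF Fc]
    by (simp add: D fder_pos[OF \<open>m > 0\<close>] Fc_fstar_deriv[OF Fc \<open>m > 0\<close>] bregman_def algebra_simps)
  show "integrable P (\<lambda>x. - bregman_tangent f 1 m (g x) (q x))"
    unfolding bregman_tangent_def using g_integrable q by simp
  show "(\<integral>x. - bregman_tangent f 1 m (g x) (q x) \<partial>P) = - bregman f 1 m"
    unfolding bregman_tangent_def using g_integrable q g_integral m(1)
    by (simp add: prob_space algebra_simps)
  show "AE x in P. g x * h x - H x \<le> f (g x) + - bregman_tangent f 1 m (g x) (q x)"
    using good by (rule eventually_mono)
      (use fstar_subgrad_bregman_bound[OF Fc _ _ g_nonneg \<open>m > 0\<close>] in force)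
qed

lemma dual_obj_le_mean_nonpos:
  assumes h: "h \<in> borel_measurable P" and H: "integrable P H"
    and good: "AE x in P. fstar f (h x) = ereal (H x) \<and> fstar_subgrad f (h x) (q x)"
    and q: "integrable P q" and m: "(\<integral>x. q x \<partial>P) = m" "m \<le> 0"
    and D: "Dtilde f fsd P h = ereal (\<integral>x. H x \<partial>P) + ereal (fder f m) - fstar f (fder f m)"
  shows "dual_obj f fsd N P h \<le> ereal (\<integral>x. f (g x) \<partial>P)"
proof -
  have q_nonneg: "AE x in P. 0 \<le> q x"
    using good by (rule eventually_mono) (use fstar_subgrad_nonneg[OF Fc] in blast)
  then have "m = 0" using integral_nonneg_AE[OF q_nonneg] m by simp
  then have "AE x in P. q x = 0"
    using integral_nonneg_eq_0_iff_AE[OF q q_nonneg] m by simp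
  with good have good0: "AE x in P. fstar f (h x) = ereal (H x) \<and> fstar_subgrad f (h x) 0"
    by eventually_elim simp
  then obtain x0 where x0: "fstar f (h x0) = ereal (H x0)" "fstar_subgrad f (h x0) 0"
    using eventually_happens'[OF ae_filter_bot] by blast
  \<comment> \<open>One point with subgradient 0 bounds \<open>f'\<close> from below, so \<open>f'(0)\<close> is a genuine infimum.\<close>
  have fstar_fder_0: "fstar f (fder f 0) = ereal (- f 0)"
    using Fc_fstar_fder_0[OF Fc fstar_subgrad_0_le_deriv[OF Fc x0]] by simp
  define c where "c = fder f 0"
  show ?thesis
  proof (rule dual_obj_le_of_pointwise[OF h _ H, where k = "c + f 0"
        and Z = "\<lambda>x. c + f 0 + (c - deriv f 1) * (g x - 1)"])
    show "Dtilde f fsd P h = ereal ((\<integral>x. H x \<partial>P) + (c + f 0))"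
      using fstar_fder_0 by (simp add: D \<open>m = 0\<close> c_def)
    show "integrable P (\<lambda>x. c + f 0 + (c - deriv f 1) * (g x - 1))"
      using g_integrable by simp
    show "(\<integral>x. c + f 0 + (c - deriv f 1) * (g x - 1) \<partial>P) = c + f 0"
      using g_integrable g_integral by (simp add: prob_space)
    show "AE x in P. g x * h x - H x \<le> f (g x) + (c + f 0 + (c - deriv f 1) * (g x - 1))"
      using good0
    proof (rule eventually_mono)
      fix x assume x: "fstar f (h x) = ereal (H x) \<and> fstar_subgrad f (h x) 0"
      then have "h x \<le> c"
        unfolding c_def by (intro Fc_fder_0_ge[OF Fc] fstar_subgrad_0_le_deriv[OF Fc]) auto
      from fstar_subgrad_0_bound[OF Fc conjunct1[OF x] conjunct2[OF x] g_nonneg[of x] this]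
      show "g x * h x - H x \<le> f (g x) + (c + f 0 + (c - deriv f 1) * (g x - 1))" by simp
    qed
  qed
qed

lemma dual_obj_le:
  assumes sg: "\<And>t. fstar f t \<noteq> \<infinity> \<Longrightarrow> fstar_subgrad f t (fsd t)"
    and h: "h \<in> borel_measurable P"
  shows "dual_obj f fsd N P h \<le> ereal (\<integral>x. f (g x) \<partial>P)"
proof (cases "eintegrable P (\<lambda>x. fstar f (h x))")
  case False
  then show ?thesis by (simp add: dual_obj_def Dtilde_def)
next
  case True
  define H where "H x = real_of_ereal (fstar f (h x))" for x
  have H: "integrable P H" and eint_H: "eint P (\<lambda>x. fstar f (h x)) = ereal (\<integral>x. H x \<partial>P)"
    using eintegrable_integrable_real[OF True fstar_neq_minf]
      eintegrable_eint_eq[OF True fstar_neq_minf] unfolding H_def[abs_def] by simp_all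
  have good: "AE x in P. fstar f (h x) = ereal (H x) \<and> fstar_subgrad f (h x) (fsd (h x))"
    using eintegrable_AE_finite[OF True fstar_neq_minf]
  proof (rule eventually_mono)
    fix x assume finite: "fstar f (h x) = ereal (real_of_ereal (fstar f (h x)))"
    then have "fstar f (h x) \<noteq> \<infinity>" by (cases "fstar f (h x)") auto
    with finite sg show "fstar f (h x) = ereal (H x) \<and> fstar_subgrad f (h x) (fsd (h x))"
      unfolding H_def by blast
  qed
  show ?thesis
  proof (cases "integrable P (\<lambda>x. fsd (h x))")
    case False
    show ?thesis
    proof (rule dual_obj_le_of_pointwise[OF h _ H, where k = 0 and Z = "\<lambda>_. 0"])
      show "Dtilde f fsd P h = ereal ((\<integral>x. H x \<partial>P) + 0)"
        using True False eint_H by (simp add: Dtilde_def)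
      show "AE x in P. g x * h x - H x \<le> f (g x) + 0"
        using good
      proof (rule eventually_mono)
        fix x assume "fstar f (h x) = ereal (H x) \<and> fstar_subgrad f (h x) (fsd (h x))"
        with fenchel_young[OF g_nonneg, of x "h x" f] show "g x * h x - H x \<le> f (g x) + 0" by simp
      qed
    qed auto
  next
    case q_int: True
    define m where "m = (\<integral>x. fsd (h x) \<partial>P)"
    have D: "Dtilde f fsd P h = ereal (\<integral>x. H x \<partial>P) + ereal (fder f m) - fstar f (fder f m)"
      using True q_int eint_H by (simp add: Dtilde_def m_def Let_def)
    show ?thesis
      using dual_obj_le_mean_pos[OF h H good q_int m_def[symmetric] _ D]
        dual_obj_le_mean_nonpos[OF h H good q_int m_def[symmetric] _ D]
      by fastforce
  qed
qed

lemma dual_obj_ge: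
  assumes h: "h \<in> borel_measurable P"
    and H: "integrable P H" "\<And>x. fstar f (h x) = ereal (H x)"
    and gh: "integrable P (\<lambda>x. g x * h x)"
  shows "ereal ((\<integral>x. g x * h x \<partial>P) - (\<integral>x. H x \<partial>P)) \<le> dual_obj f fsd N P h"
proof -
  have "eintegrable P (\<lambda>x. fstar f (h x))"
    using H by (auto simp: eintegrable_def real_integrable_def less_top)
  then have "Dtilde f fsd P h \<le> eint P (\<lambda>x. fstar f (h x))" by (rule Dtilde_le_eint[OF Fc])
  also have "\<dots> = ereal (\<integral>x. H x \<partial>P)" using eint_ereal[OF H(1)] H(2) by simp
  finally have "Dtilde f fsd P h \<le> ereal (\<integral>x. H x \<partial>P)" .
  moreover have "eint N (\<lambda>x. ereal (h x)) = ereal (\<integral>x. g x * h x \<partial>P)"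
    using eint_N[OF h] eint_ereal[OF gh] by simp
  ultimately show ?thesis by (cases "Dtilde f fsd P h") (auto simp: dual_obj_def)
qed

lemma borel_measurable_cutoff_tangent:
  "(\<lambda>x. f (cutoff n (g x)) + deriv f (cutoff n (g x)) * (g x - cutoff n (g x))) \<in> borel_measurable P"
  using Fc_borel_measurable_cutoff[OF Fc g_measurable, of n] unfolding cutoff_def by measurable

lemma integrable_cutoff_tangent:
  "integrable P (\<lambda>x. f (cutoff n (g x)) + deriv f (cutoff n (g x)) * (g x - cutoff n (g x)))"
proof (rule Bochner_Integration.integrable_bound[OF _ borel_measurable_cutoff_tangent])
  show "integrable P (\<lambda>x. \<bar>f (g x)\<bar> + \<bar>deriv f 1 * (g x - 1)\<bar>)"
    using f_g_integrable g_integrable by simp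
  show "AE x in P. norm (f (cutoff n (g x)) + deriv f (cutoff n (g x)) * (g x - cutoff n (g x)))
      \<le> norm (\<bar>f (g x)\<bar> + \<bar>deriv f 1 * (g x - 1)\<bar>)"
    using Fc_cutoff_tangent_abs_le[OF Fc g_nonneg] by simp
qed

lemma integrable_mult_deriv_cutoff: "integrable P (\<lambda>x. g x * deriv f (cutoff n (g x)))"
proof (rule Bochner_Integration.integrable_bound)
  define B where "B = \<bar>deriv f (1 / Suc n)\<bar> + \<bar>deriv f (Suc n)\<bar>"
  show "integrable P (\<lambda>x. B * g x)" using g_integrable by simp
  show "(\<lambda>x. g x * deriv f (cutoff n (g x))) \<in> borel_measurable P"
    using Fc_borel_measurable_cutoff(2)[OF Fc g_measurable] by measurable
  show "AE x in P. norm (g x * deriv f (cutoff n (g x))) \<le> norm (B * g x)"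
  proof (rule AE_I2)
    fix x
    have "g x * \<bar>deriv f (cutoff n (g x))\<bar> \<le> g x * B"
      using Fc_abs_deriv_cutoff_le[OF Fc] g_nonneg by (simp add: B_def mult_left_mono)
    then show "norm (g x * deriv f (cutoff n (g x))) \<le> norm (B * g x)"
      using g_nonneg[of x] by (simp add: abs_mult B_def mult.commute)
  qed
qed

lemma tendsto_integral_cutoff_tangent:
  "(\<lambda>n. \<integral>x. f (cutoff n (g x)) + deriv f (cutoff n (g x)) * (g x - cutoff n (g x)) \<partial>P)
     \<longlonglongrightarrow> (\<integral>x. f (g x) \<partial>P)"
proof (rule integral_dominated_convergence[OF _ borel_measurable_cutoff_tangent])
  show "integrable P (\<lambda>x. \<bar>f (g x)\<bar> + \<bar>deriv f 1 * (g x - 1)\<bar>)"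
    using f_g_integrable g_integrable by simp
  show "(\<lambda>x. f (g x)) \<in> borel_measurable P"
    by (rule borel_measurable_integrable[OF f_g_integrable])
  show "AE x in P. (\<lambda>n. f (cutoff n (g x)) + deriv f (cutoff n (g x)) * (g x - cutoff n (g x)))
      \<longlonglongrightarrow> f (g x)"
    using Fc_cutoff_tangent_tendsto[OF Fc g_nonneg] by simp
  show "AE x in P. norm (f (cutoff n (g x)) + deriv f (cutoff n (g x)) * (g x - cutoff n (g x)))
      \<le> \<bar>f (g x)\<bar> + \<bar>deriv f 1 * (g x - 1)\<bar>" for n
    using Fc_cutoff_tangent_abs_le[OF Fc g_nonneg] by simp
qed

lemma integral_le_SUP_dual_obj:
  "ereal (\<integral>x. f (g x) \<partial>P) \<le> (SUP h\<in>borel_measurable P. dual_obj f fsd N P h)"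
proof -
  define h where "h n x = deriv f (cutoff n (g x))" for n x
  define T where "T n x = f (cutoff n (g x)) + h n x * (g x - cutoff n (g x))" for n x
  have bound: "ereal (\<integral>x. T n x \<partial>P) \<le> (SUP h\<in>borel_measurable P. dual_obj f fsd N P h)" for n
  proof -
    have "h n \<in> borel_measurable P"
      unfolding h_def by (rule Fc_borel_measurable_cutoff(2)[OF Fc g_measurable])
    moreover have "fstar f (h n x) = ereal (g x * h n x - T n x)" for x
      using Fc_fstar_deriv[OF Fc cutoff_pos] by (simp add: h_def T_def algebra_simps)
    moreover have "integrable P (\<lambda>x. g x * h n x)" "integrable P (T n)"
      unfolding h_def T_def by (rule integrable_mult_deriv_cutoff integrable_cutoff_tangent)+
    ultimately have "ereal (\<integral>x. T n x \<partial>P) \<le> dual_obj f fsd N P (h n)"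
      using dual_obj_ge[of "h n" "\<lambda>x. g x * h n x - T n x" fsd] by simp
    also have "\<dots> \<le> (SUP h\<in>borel_measurable P. dual_obj f fsd N P h)"
      using \<open>h n \<in> borel_measurable P\<close> by (rule SUP_upper)
    finally show ?thesis .
  qed
  from tendsto_ereal[OF tendsto_integral_cutoff_tangent] show ?thesis
    unfolding T_def[symmetric] h_def[symmetric] by (rule tendsto_upperbound) (use bound in auto)
qed

lemma SUP_dual_obj_eq:
  assumes "\<And>t. fstar f t \<noteq> \<infinity> \<Longrightarrow> fstar_subgrad f t (fsd t)"
  shows "(SUP h\<in>borel_measurable P. dual_obj f fsd N P h) = ereal (\<integral>x. f (g x) \<partial>P)"
  using integral_le_SUP_dual_obj dual_obj_le[OF assms] by (intro antisym SUP_least) auto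

end

lemma
  assumes P: "prob_space P" and N: "prob_space N" and sets: "sets N = sets P"
    and f: "Fc f" and finite: "fdiv f N P < \<infinity>"
  defines "g \<equiv> \<lambda>x. enn2real (RN_deriv P N x)"
  shows fdiv_density_RN_deriv: "fdiv_density P f N g"
    and fdiv_eq_integral_RN_deriv: "fdiv f N P = ereal (\<integral>x. f (g x) \<partial>P)"
proof -
  interpret P: prob_space P by fact
  interpret N: prob_space N by fact
  have ac: "absolutely_continuous P N" using finite by (auto simp: fdiv_def split: if_splits)
  have fdiv: "fdiv f N P = eint P (\<lambda>x. ereal (f (g x)))" using ac by (simp add: fdiv_def g_def)
  have g_meas: "g \<in> borel_measurable P" unfolding g_def by measurable
  have g_nonneg: "0 \<le> g x" for x unfolding g_def by simp
  note nn_integral_N = nn_integral_RN_deriv_real[OF P.sigma_finite_measure_axioms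
      N.sigma_finite_measure_axioms sets ac]
  have eint_N: "eint N (\<lambda>x. ereal (h x)) = eint P (\<lambda>x. ereal (g x * h x))"
    if "h \<in> borel_measurable P" for h
    using nn_integral_N[OF that] nn_integral_N[of "\<lambda>x. - h x"] that by (simp add: eint_def g_def)
  have "(\<integral>\<^sup>+ x. ennreal (g x) \<partial>P) = 1"
    using nn_integral_N[of "\<lambda>_. 1"] N.emeasure_space_1 by (simp add: g_def)
  then have g_int: "integrable P g" and g_integral: "(\<integral>x. g x \<partial>P) = 1"
    using g_meas g_nonneg by (simp_all add: real_integrable_def real_lebesgue_integral_def ennreal_neg)
  have f_g_int: "integrable P (\<lambda>x. f (g x))"
  proof (rule integrable_if_eint_less_top[OF Fc_borel_measurable[OF f g_meas g_nonneg]])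
    show "integrable P (\<lambda>x. deriv f 1 * (g x - 1))" using g_int by simp
    show "deriv f 1 * (g x - 1) \<le> f (g x)" for x by (rule Fc_above_tangent_1[OF f g_nonneg])
    show "eint P (\<lambda>x. ereal (f (g x))) < \<infinity>" using finite fdiv by simp
  qed
  show "fdiv_density P f N g"
    by unfold_locales (use f g_meas g_nonneg g_int g_integral eint_N f_g_int in auto)
  show "fdiv f N P = ereal (\<integral>x. f (g x) \<partial>P)"
    using fdiv eint_ereal[OF f_g_int] by simp
qed

theorem lemma4:
  fixes P N :: "'a measure" and f fsd :: "real \<Rightarrow> real"
  assumes "prob_space P"
    and "Fc f"
    and "\<And>t. fstar f t \<noteq> \<infinity> \<Longrightarrow> fstar_subgrad f t (fsd t)"
    and "prob_space N" and "sets N = sets P"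
    and "fdiv f N P < \<infinity>"
  shows "fdiv f N P = (SUP h\<in>borel_measurable P. dual_obj f fsd N P h)"
proof -
  interpret fdiv_density P f N "\<lambda>x. enn2real (RN_deriv P N x)"
    by (rule fdiv_density_RN_deriv[OF assms(1,4,5,2,6)])
  show ?thesis
    using fdiv_eq_integral_RN_deriv[OF assms(1,4,5,2,6)] SUP_dual_obj_eq[OF assms(3)] by simp
qed

end
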